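(* For every integer $k\ge0$, let $b_i$ denote the coefficient of $z^i$ in the power series expansion of $\left(\frac{\ln(1+z)}{z}\right)^{4k+1}$. Then $\nu(b_{4k})=-4k$.
   Context: $\nu(r)$ denotes the 2-adic valuation of a nonzero rational number $r$ (e.g. $\nu(4)=2$, $\nu(3)=0$, $\nu(1/8)=-3$). $\frac{\ln(1+z)}{z}=1-\frac z2+\frac{z^2}{3}-\frac{z^3}{4}+\cdots$. *)

theory Defs
  imports "HOL-Computational_Algebra.Computational_Algebra"
begin

(* 2-adic valuation of a rational number r (meaningful for r \<noteq> 0):
   nu r = v_2(numerator) - v_2(denominator) *)
definition nu2 :: "rat \<Rightarrow> int" where
  "nu2 r = (let (a, b) = quotient_of r in
              int (multiplicity (2::int) a) - int (multiplicity (2::int) b))"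

definition log1p_over_z :: "rat fps" where
  "log1p_over_z = fps_shift 1 (fps_ln 1)"

end

theory Submission
  imports Defs "HOL-Library.Z2"
begin

text \<open>
  Write \<open>f = ln(1+z)/z\<close>, so \<open>f\<^sub>n = (-1)\<^sup>n/(n+1)\<close>, and let \<open>Q\<close> be the product of the odd
  numbers up to \<open>N+1\<close>. For \<open>n \<le> N\<close> the coefficient \<open>Q 2\<^sup>n f\<^sub>n\<close> of \<open>Q f(2z)\<close> is an integer,
  odd for \<open>n \<le> 1\<close> and even for \<open>n \<ge> 2\<close>, because the 2-part of \<open>n+1\<close> is less than \<open>2\<^sup>n\<close>
  once \<open>n \<ge> 2\<close>. Hence \<open>Q f(2z) \<equiv> 1 + z\<close> modulo 2 and up to degree \<open>N\<close>, so the integer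
  \<open>Q\<^bsup>N+1\<^esup> 2\<^sup>N [z\<^sup>N] f\<^bsup>N+1\<^esup>\<close> is congruent to \<open>[z\<^sup>N] (1+z)\<^bsup>N+1\<^esup> = N+1\<close> modulo 2.
  For even \<open>N\<close> it is odd, and \<open>[z\<^sup>N] f\<^bsup>N+1\<^esup>\<close> has 2-adic valuation exactly \<open>-N\<close>.
\<close>

lemma nu2_eq_neg_exp:
  fixes r :: rat and u c :: int
  assumes eq: "r * of_int u * 2 ^ e = of_int c" and u: "odd u" and c: "odd c"
  shows "nu2 r = - int e"
proof -
  obtain a b where qb: "quotient_of r = (a, b)" by (cases "quotient_of r") auto
  have bpos: "b > 0" using quotient_of_denom_pos[OF qb] .
  have r: "r = of_int a / of_int b" using quotient_of_div[OF qb] .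
  have "of_int a * of_int u * 2 ^ e = (of_int c * of_int b :: rat)"
    using eq bpos unfolding r by (simp add: field_simps)
  hence ie: "a * u * 2 ^ e = c * b"
    by (metis (mono_tags, opaque_lifting) of_int_eq_iff of_int_mult of_int_numeral of_int_power)
  have u0: "u \<noteq> 0" and c0: "c \<noteq> 0" using u c by auto
  have a0: "a \<noteq> 0" using ie c0 bpos by auto
  have p2: "prime_elem (2::int)" by simp
  have "multiplicity 2 (a * u * 2 ^ e) = multiplicity 2 a + multiplicity 2 u + e"
    using a0 u0 by (simp add: prime_elem_multiplicity_mult_distrib[OF p2])
  moreover have "multiplicity 2 (c * b) = multiplicity 2 c + multiplicity (2::int) b"
    using c0 bpos by (simp add: prime_elem_multiplicity_mult_distrib[OF p2])
  moreover have "multiplicity (2::int) u = 0" "multiplicity (2::int) c = 0"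
    using u c by (auto intro: not_dvd_imp_multiplicity_0)
  ultimately have "multiplicity 2 a + e = multiplicity (2::int) b" using ie by simp
  thus ?thesis unfolding nu2_def qb by simp
qed

lemma of_int_bit: "(of_int x :: bit) = (if even x then 0 else 1)"
  by (cases "even x") (auto elim!: evenE oddE)

lemma fps_power_nth_cong:
  fixes A B :: "'a::comm_ring_1 fps"
  assumes "\<And>i. i \<le> N \<Longrightarrow> A $ i = B $ i" and "n \<le> N"
  shows "(A ^ m) $ n = (B ^ m) $ n"
  using assms(2)
proof (induction m arbitrary: n)
  case 0
  then show ?case by simp
next
  case (Suc m)
  show ?case unfolding power_Suc fps_mult_nth
    by (rule sum.cong) (use Suc assms(1) in auto)
qed

lemma fps_one_plus_X_power_nth:
  "((1 + fps_X :: 'a::comm_ring_1 fps) ^ m) $ j = of_nat (m choose j)"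
proof (induction m arbitrary: j)
  case 0
  then show ?case by (cases j) simp_all
next
  case (Suc m)
  then show ?case by (cases j) (simp_all add: algebra_simps)
qed

definition of_int_fps :: "int fps \<Rightarrow> 'a::comm_ring_1 fps" where
  "of_int_fps A = Abs_fps (\<lambda>n. of_int (A $ n))"

lemma of_int_fps_nth [simp]: "of_int_fps A $ n = of_int (A $ n)"
  by (simp add: of_int_fps_def)

lemma of_int_fps_power: "(of_int_fps (A ^ m) :: 'a::comm_ring_1 fps) = of_int_fps A ^ m"
proof (induction m)
  case 0
  show ?case by (rule fps_ext) simp
next
  case (Suc m)
  show ?case unfolding power_Suc Suc.IH[symmetric]
    by (rule fps_ext) (simp add: fps_mult_nth)
qed

definition odd_prod :: "nat \<Rightarrow> int" where
  "odd_prod M = (\<Prod>j | j \<in> {1..M} \<and> odd j. int j)"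

lemma odd_odd_prod: "odd (odd_prod M)"
  unfolding odd_prod_def by (subst even_prod_iff) auto

lemma odd_part_dvd_odd_prod:
  assumes "n = 2 ^ a * q" "odd q" "n \<le> M"
  shows "int q dvd odd_prod M"
proof -
  have "0 < q" using assms(2) by (rule odd_pos)
  moreover have "q \<le> n" unfolding assms(1) by simp
  ultimately have "q \<in> {j. j \<in> {1..M} \<and> odd j}" using assms(2,3) by simp
  then show ?thesis unfolding odd_prod_def by (intro dvd_prodI) auto
qed

lemma succ_dvd_odd_prod_times_pow2:
  assumes "n + 1 \<le> M" and "n + 1 < 2 ^ (n + 1 - d)"
  shows "2 ^ d * int (n + 1) dvd odd_prod M * 2 ^ n"
proof -
  define a where "a = multiplicity 2 (n + 1)"
  obtain q where q: "n + 1 = 2 ^ a * q" "\<not> 2 dvd q"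
    unfolding a_def by (rule multiplicity_decompose'[of "n + 1" 2]) simp_all
  have "q \<ge> 1" using q(2) by (cases q) auto
  then have "(2::nat) ^ a \<le> n + 1"
    unfolding q(1) by simp
  then have "(2::nat) ^ a < 2 ^ (n + 1 - d)" using assms(2) by (rule le_less_trans)
  then have "a < n + 1 - d" by (rule power_less_imp_less_exp[rotated]) simp
  then have "d + a \<le> n" by linarith
  then have "(2::int) ^ (d + a) dvd 2 ^ n" by (rule le_imp_power_dvd)
  moreover have "int q dvd odd_prod M"
    using odd_part_dvd_odd_prod[OF q(1) _ assms(1)] q(2) by simp
  ultimately have "2 ^ (d + a) * int q dvd odd_prod M * 2 ^ n"
    by (subst mult.commute) (rule mult_dvd_mono)
  moreover have "int (n + 1) = 2 ^ a * int q"
    using arg_cong[OF q(1), of int] by simp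
  ultimately show ?thesis by (simp add: power_add ac_simps)
qed

lemma log1p_over_z_nth: "log1p_over_z $ n = (-1) ^ n / of_nat (n + 1)"
  by (simp add: log1p_over_z_def fps_ln_nth)

definition scaled_log_coeff :: "nat \<Rightarrow> nat \<Rightarrow> int" where
  "scaled_log_coeff M n = (-1) ^ n * (odd_prod M * 2 ^ n div int (n + 1))"

lemma of_int_scaled_log_coeff:
  assumes "n + 1 \<le> M"
  shows "of_int (scaled_log_coeff M n) = of_int (odd_prod M) * 2 ^ n * log1p_over_z $ n"
proof -
  have "int (n + 1) dvd odd_prod M * 2 ^ n"
    using succ_dvd_odd_prod_times_pow2[OF assms, of 0] less_exp[of "n + 1"] by simp
  then show ?thesis
    by (simp add: scaled_log_coeff_def log1p_over_z_nth of_int_div)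
qed

lemma scaled_log_coeff_mod_two:
  assumes "n + 1 \<le> M"
  shows "(of_int (scaled_log_coeff M n) :: bit) = (1 + fps_X) $ n"
proof -
  consider "n = 0" | "n = 1" | "2 \<le> n" by linarith
  then show ?thesis
  proof cases
    case 3
    have "n + 1 < 2 ^ n"
      using \<open>2 \<le> n\<close> by (induction n rule: dec_induct) simp_all
    then obtain t where "odd_prod M * 2 ^ n = int (n + 1) * (2 * t)"
      using succ_dvd_odd_prod_times_pow2[OF assms, of 1]
      by (auto elim!: dvdE simp: ac_simps)
    then have "even (scaled_log_coeff M n)"
      unfolding scaled_log_coeff_def by (simp del: of_nat_Suc)
    with 3 show ?thesis by (simp add: of_int_bit)
  qed (use odd_odd_prod[of M] in \<open>simp_all add: scaled_log_coeff_def of_int_bit\<close>)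
qed

theorem nu2_log1p_over_z_power_nth_diag:
  assumes "even N"
  shows "nu2 ((log1p_over_z ^ (N + 1)) $ N) = - int N"
proof -
  define Q where "Q = odd_prod (N + 1)"
  define G where "G = Abs_fps (scaled_log_coeff (N + 1))"
  define c where "c = (G ^ (N + 1)) $ N"
  have "(of_int c :: rat) = (of_int_fps G ^ (N + 1)) $ N"
    by (simp only: c_def of_int_fps_power[symmetric] of_int_fps_nth)
  also have "\<dots> = ((fps_const (of_int Q) * (log1p_over_z oo (fps_const 2 * fps_X))) ^ (N + 1)) $ N"
    by (rule fps_power_nth_cong[of N]) (simp_all add: G_def Q_def of_int_scaled_log_coeff)
  also have "\<dots> = (log1p_over_z ^ (N + 1)) $ N * of_int (Q ^ (N + 1)) * 2 ^ N"
    by (simp add: power_mult_distrib fps_const_power fps_compose_power del: power_Suc)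
  finally have c: "(log1p_over_z ^ (N + 1)) $ N * of_int (Q ^ (N + 1)) * 2 ^ N = of_int c" ..
  have "(of_int c :: bit) = (of_int_fps G ^ (N + 1)) $ N"
    by (simp only: c_def of_int_fps_power[symmetric] of_int_fps_nth)
  also have "\<dots> = ((1 + fps_X) ^ (N + 1)) $ N"
    by (rule fps_power_nth_cong[of N]) (simp_all add: G_def scaled_log_coeff_mod_two)
  also have "\<dots> = of_nat (N + 1)"
    by (simp only: fps_one_plus_X_power_nth) simp
  also have "\<dots> = 1"
    using assms of_int_bit[of "int (N + 1)"] by simp
  finally have "odd c" by (simp add: of_int_bit split: if_splits)
  moreover have "odd (Q ^ (N + 1))" by (simp add: Q_def odd_odd_prod)
  ultimately show ?thesis using nu2_eq_neg_exp[OF c] by blast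
qed

theorem lemmaA:
  fixes k :: nat
  shows "nu2 ((log1p_over_z ^ (4 * k + 1)) $ (4 * k)) = - (4 * int k)"
  using nu2_log1p_over_z_power_nth_diag[of "4 * k"] by simp

end
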